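(* Let $B_0,B_1\subset\mathbb Z^k$ be $k$-dimensional boxes of size $1$, let $\bar S\subset\mathbb Q^k$ be the convex hull of $B_0\cup B_1$ in $\mathbb Q^k$, and let $S=\bar S\cap\mathbb Z^k$. Then $S$ is lattice path connected.
   Context: A $k$-dimensional box of size $1$ is $\{\vec z\in\mathbb Z^k: c_i\le z_i\le c_i+1,\ i=1,\dots,k\}$ for some $c_i\in\mathbb Z$. A lattice path is a sequence $(T_i)_{i\ge1}$ in $\mathbb Z^k$ with $T_i-T_{i-1}\in\{\pm\vec e_1,\dots,\pm\vec e_k\}$ for all $i>1$. A set $S\subset\mathbb Z^k$ is lattice path connected if for all $\vec z_1,\vec z_2\in S$ there is a lattice path contained in $S$ with $T_1=\vec z_1$ and $T_i=\vec z_2$ for some $i\ge1$. *)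

theory Defs
  imports "HOL-Analysis.Analysis"
begin

text \<open>Points of Z^k are vectors int^'n, points of Q^k are rat^'n (k = CARD('n)).\<close>

definition box1 :: "int^'n \<Rightarrow> (int^'n) set" where
  "box1 c = {z. \<forall>i. c$i \<le> z$i \<and> z$i \<le> c$i + 1}"

definition is_box1 :: "(int^'n) set \<Rightarrow> bool" where
  "is_box1 B \<longleftrightarrow> (\<exists>c. B = box1 c)"

definition int_to_rat_vec :: "int^'n \<Rightarrow> rat^'n" where
  "int_to_rat_vec z = (\<chi> i. of_int (z$i))"

definition rat_convex_hull :: "(rat^'n) set \<Rightarrow> (rat^'n) set" where
  "rat_convex_hull A = {x. \<exists>F u. finite F \<and> F \<subseteq> A \<and> (\<forall>a\<in>F. 0 \<le> u a) \<and>
        sum u F = 1 \<and> x = (\<Sum>a\<in>F. u a *s a)}"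

definition lattice_step :: "int^'n \<Rightarrow> int^'n \<Rightarrow> bool" where
  "lattice_step x y \<longleftrightarrow> (\<exists>i. y - x = axis i 1 \<or> y - x = axis i (-1))"

definition lattice_path_connected :: "(int^'n) set \<Rightarrow> bool" where
  "lattice_path_connected S \<longleftrightarrow>
     (\<forall>z1\<in>S. \<forall>z2\<in>S. \<exists>T :: nat \<Rightarrow> int^'n. \<exists>n.
        (\<forall>i. T i \<in> S) \<and> (\<forall>i. lattice_step (T i) (T (Suc i))) \<and> T 0 = z1 \<and> T n = z2)"

end

theory Submission
  imports Defs
begin

text \<open>Write \<open>B\<^sub>0 = c + [0,1]\<^sup>k\<close> and \<open>B\<^sub>1 = d + [0,1]\<^sup>k\<close>. The convex hull of \<open>B\<^sub>0 \<union> B\<^sub>1\<close> is the union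
  of the unit cubes \<open>p + [0,1]\<^sup>k\<close> whose corner \<open>p\<close> runs along the segment from \<open>c\<close> to \<open>d\<close>.
  Given a lattice point \<open>z \<noteq> c\<close> of this union, slide its cube back towards \<open>c\<close> as far as
  possible while it still contains \<open>z\<close>. Either it reaches \<open>B\<^sub>0\<close>, where a unit step towards \<open>c\<close>
  stays in \<open>B\<^sub>0\<close>, or a face of the cube passes through \<open>z\<close> in some coordinate, and a unit step
  across that face stays in the same cube. Both steps decrease the \<open>\<ell>\<^sup>1\<close> distance to \<open>c\<close>, so
  every lattice point is joined to \<open>c\<close> by a lattice path. Infinite paths, as required by
  the definition, are obtained by oscillating along an edge at \<open>c\<close>.\<close>

lemma rat_convex_hull_mono: "A \<subseteq> B \<Longrightarrow> rat_convex_hull A \<subseteq> rat_convex_hull B"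
  unfolding rat_convex_hull_def by blast

lemma hull_subset_rat_convex_hull: "A \<subseteq> rat_convex_hull A"
proof
  fix a assume "a \<in> A"
  then show "a \<in> rat_convex_hull A"
    unfolding rat_convex_hull_def by (intro CollectI exI[of _ "{a}"] exI[of _ "\<lambda>_. 1"]) simp
qed

lemma rat_convex_hull_convex:
  assumes x: "x \<in> rat_convex_hull A" and y: "y \<in> rat_convex_hull A" and l: "0 \<le> l" "l \<le> 1"
  shows "(1 - l) *s x + l *s y \<in> rat_convex_hull A"
proof -
  obtain F u where F: "finite F" "F \<subseteq> A" "\<forall>a\<in>F. 0 \<le> u a" "sum u F = 1" "x = (\<Sum>a\<in>F. u a *s a)"
    using x unfolding rat_convex_hull_def by blast
  obtain G v where G: "finite G" "G \<subseteq> A" "\<forall>a\<in>G. 0 \<le> v a" "sum v G = 1" "y = (\<Sum>a\<in>G. v a *s a)"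
    using y unfolding rat_convex_hull_def by blast
  define u' where "u' a = (if a \<in> F then u a else 0)" for a
  define v' where "v' a = (if a \<in> G then v a else 0)" for a
  define w where "w a = (1 - l) * u' a + l * v' a" for a
  have fin: "finite (F \<union> G)" using F G by simp
  have extend: "(\<Sum>a\<in>F \<union> G. (if a \<in> H then f a else 0)) = sum f H"
    if "H \<subseteq> F \<union> G" for H and f :: "rat^'a \<Rightarrow> 'b::comm_monoid_add"
    using sum.inter_restrict[OF fin, of f H] that by (simp add: Int_absorb1)
  have "sum w (F \<union> G) = (1 - l) * sum u F + l * sum v G"
    unfolding w_def u'_def v'_def sum.distrib sum_distrib_left[symmetric]
    by (simp add: extend)
  moreover have "(\<Sum>a\<in>F \<union> G. w a *s a)
      = (\<Sum>a\<in>F \<union> G. (1 - l) *s (if a \<in> F then u a *s a else 0)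
                          + l *s (if a \<in> G then v a *s a else 0))"
    by (rule sum.cong) (auto simp: w_def u'_def v'_def vec_eq_iff algebra_simps)
  moreover have "\<dots> = (1 - l) *s x + l *s y"
    unfolding sum.distrib F(5) G(5) extend[OF Un_upper1, symmetric] extend[OF Un_upper2, symmetric]
    by (simp add: vec_eq_iff sum_distrib_left sum_subtractf)
  ultimately have "sum w (F \<union> G) = 1" "(\<Sum>a\<in>F \<union> G. w a *s a) = (1 - l) *s x + l *s y"
    using F G by simp_all
  moreover have "\<forall>a\<in>F \<union> G. 0 \<le> w a" using F G l unfolding w_def u'_def v'_def by auto
  ultimately show ?thesis
    unfolding rat_convex_hull_def using fin F G by (intro CollectI exI[of _ "F \<union> G"] exI[of _ w]) auto
qed

definition rat_cube :: "rat^'n \<Rightarrow> (rat^'n) set" where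
  "rat_cube p = {x. \<forall>i. p$i \<le> x$i \<and> x$i \<le> p$i + 1}"

lemma int_to_rat_vec_mem_rat_cube:
  "int_to_rat_vec z \<in> rat_cube p \<longleftrightarrow> (\<forall>i. p$i \<le> of_int (z$i) \<and> of_int (z$i) \<le> p$i + 1)"
  by (simp add: rat_cube_def int_to_rat_vec_def)

lemma int_to_rat_vec_mem_rat_cube_int:
  "int_to_rat_vec z \<in> rat_cube (int_to_rat_vec c) \<longleftrightarrow> z \<in> box1 c"
proof -
  have "rat_of_int a \<le> rat_of_int b + 1 \<longleftrightarrow> a \<le> b + 1" for a b
    by (metis of_int_1 of_int_add of_int_le_iff)
  then show ?thesis
    unfolding int_to_rat_vec_mem_rat_cube by (simp add: box1_def int_to_rat_vec_def)
qed

text \<open>Induction on the number of coordinates of \<open>x\<close> that are not integers: such a coordinate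
  splits \<open>x\<close> as a convex combination of the two points obtained by moving it to either face.\<close>
lemma rat_cube_subset_rat_convex_hull_box1:
  fixes c :: "int^'n"
  shows "rat_cube (int_to_rat_vec c) \<subseteq> rat_convex_hull (int_to_rat_vec ` box1 c)"
proof
  fix x :: "rat^'n"
  assume "x \<in> rat_cube (int_to_rat_vec c)"
  then have "\<forall>i. of_int (c$i) \<le> x$i \<and> x$i \<le> of_int (c$i) + 1"
    by (simp add: rat_cube_def int_to_rat_vec_def)
  then show "x \<in> rat_convex_hull (int_to_rat_vec ` box1 c)"
  proof (induction "card {i. x$i \<noteq> of_int (c$i) \<and> x$i \<noteq> of_int (c$i) + 1}"
      arbitrary: x rule: less_induct)
    case less
    let ?N = "\<lambda>x::rat^'n. {i. x$i \<noteq> of_int (c$i) \<and> x$i \<noteq> of_int (c$i) + 1}"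
    show ?case
    proof (cases "?N x = {}")
      case True
      define z where "z = (\<chi> i. if x$i = of_int (c$i) then c$i else c$i + 1)"
      have "z \<in> box1 c" unfolding z_def box1_def by auto
      moreover have "x = int_to_rat_vec z"
        using True unfolding z_def int_to_rat_vec_def vec_eq_iff by auto
      ultimately show ?thesis using hull_subset_rat_convex_hull by blast
    next
      case False
      then obtain i where i: "i \<in> ?N x" by blast
      define x0 where "x0 = (\<chi> j. if j = i then of_int (c$j) else x$j)"
      define x1 where "x1 = (\<chi> j. if j = i then of_int (c$j) + 1 else x$j)"
      have "?N x0 \<subset> ?N x" "?N x1 \<subset> ?N x" using i unfolding x0_def x1_def by auto
      then have "card (?N x0) < card (?N x)" "card (?N x1) < card (?N x)"
        by (auto intro: psubset_card_mono)
      moreover have "\<forall>j. of_int (c$j) \<le> x0$j \<and> x0$j \<le> of_int (c$j) + 1"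
        "\<forall>j. of_int (c$j) \<le> x1$j \<and> x1$j \<le> of_int (c$j) + 1"
        using less.prems unfolding x0_def x1_def by auto
      ultimately have "x0 \<in> rat_convex_hull (int_to_rat_vec ` box1 c)"
        "x1 \<in> rat_convex_hull (int_to_rat_vec ` box1 c)"
        using less.hyps by blast+
      moreover have "0 \<le> x$i - of_int (c$i)" "x$i - of_int (c$i) \<le> 1"
        using less.prems[rule_format, of i] by auto
      ultimately have "(1 - (x$i - of_int (c$i))) *s x0 + (x$i - of_int (c$i)) *s x1
          \<in> rat_convex_hull (int_to_rat_vec ` box1 c)"
        by (rule rat_convex_hull_convex)
      moreover have "(1 - (x$i - of_int (c$i))) *s x0 + (x$i - of_int (c$i)) *s x1 = x"
        unfolding vec_eq_iff x0_def x1_def by (auto simp: algebra_simps)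
      ultimately show ?thesis by simp
    qed
  qed
qed

lemma sum_mem_rat_cube:
  assumes "\<forall>a\<in>F. 0 \<le> u a" "sum u F = 1" "\<forall>a\<in>F. a \<in> rat_cube (p a)"
  shows "(\<Sum>a\<in>F. u a *s a) \<in> rat_cube (\<Sum>a\<in>F. u a *s p a)"
  unfolding rat_cube_def
proof (intro CollectI allI conjI)
  fix i
  show "(\<Sum>a\<in>F. u a *s p a) $ i \<le> (\<Sum>a\<in>F. u a *s a) $ i"
    using assms by (auto simp: rat_cube_def intro!: sum_mono mult_left_mono)
  have "(\<Sum>a\<in>F. u a *s a) $ i \<le> (\<Sum>a\<in>F. u a * (p a $ i + 1))"
    using assms by (auto simp: rat_cube_def intro!: sum_mono mult_left_mono)
  also have "\<dots> = (\<Sum>a\<in>F. u a *s p a) $ i + 1"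
    using assms(2) by (simp add: algebra_simps sum.distrib)
  finally show "(\<Sum>a\<in>F. u a *s a) $ i \<le> (\<Sum>a\<in>F. u a *s p a) $ i + 1" .
qed

definition segment_point :: "int^'n \<Rightarrow> int^'n \<Rightarrow> rat \<Rightarrow> rat^'n" where
  "segment_point c d t = (1 - t) *s int_to_rat_vec c + t *s int_to_rat_vec d"

lemma segment_point_nth:
  "segment_point c d t $ i = of_int (c$i) + t * (of_int (d$i) - of_int (c$i))"
  by (simp add: segment_point_def int_to_rat_vec_def algebra_simps)

lemma segment_point_0: "segment_point c d 0 = int_to_rat_vec c"
  by (simp add: segment_point_def)

lemma segment_point_1: "segment_point c d 1 = int_to_rat_vec d"
  by (simp add: segment_point_def)

lemma sum_segment_point:
  assumes "sum u F = 1"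
  shows "(\<Sum>a\<in>F. u a *s segment_point c d (t a)) = segment_point c d (\<Sum>a\<in>F. u a * t a)"
proof -
  have "(\<Sum>a\<in>F. u a * (p + t a * q)) = p + (\<Sum>a\<in>F. u a * t a) * q" for p q :: rat
    using assms by (simp add: algebra_simps sum.distrib sum_distrib_right flip: sum_distrib_left)
  then show ?thesis by (simp add: vec_eq_iff segment_point_nth)
qed

definition cube_sweep :: "int^'n \<Rightarrow> int^'n \<Rightarrow> (rat^'n) set" where
  "cube_sweep c d = (\<Union>t\<in>{0..1}. rat_cube (segment_point c d t))"

lemma rat_convex_hull_subset_cube_sweep:
  "rat_convex_hull (int_to_rat_vec ` (box1 c \<union> box1 d)) \<subseteq> cube_sweep c d"
proof
  fix x assume "x \<in> rat_convex_hull (int_to_rat_vec ` (box1 c \<union> box1 d))"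
  then obtain F u where F: "F \<subseteq> int_to_rat_vec ` (box1 c \<union> box1 d)" "\<forall>a\<in>F. 0 \<le> u a"
    "sum u F = 1" "x = (\<Sum>a\<in>F. u a *s a)"
    unfolding rat_convex_hull_def by blast
  define s where "s a = (if a \<in> int_to_rat_vec ` box1 c then 0 else 1::rat)" for a
  have "\<forall>a\<in>F. a \<in> rat_cube (segment_point c d (s a))"
    using F(1) int_to_rat_vec_mem_rat_cube_int
    by (auto simp: s_def segment_point_0 segment_point_1)
  from sum_mem_rat_cube[OF F(2,3) this]
  have "x \<in> rat_cube (segment_point c d (\<Sum>a\<in>F. u a * s a))"
    unfolding F(4) sum_segment_point[OF F(3)] .
  moreover have "0 \<le> (\<Sum>a\<in>F. u a * s a)" using F(2) by (auto simp: s_def intro: sum_nonneg)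
  moreover have "(\<Sum>a\<in>F. u a * s a) \<le> (\<Sum>a\<in>F. u a)"
    using F(2) by (auto simp: s_def intro!: sum_mono)
  ultimately show "x \<in> cube_sweep c d" using F(3) by (auto simp: cube_sweep_def)
qed

lemma cube_sweep_subset_rat_convex_hull:
  "cube_sweep c d \<subseteq> rat_convex_hull (int_to_rat_vec ` (box1 c \<union> box1 d))"
proof
  fix x assume "x \<in> cube_sweep c d"
  then obtain t where t: "0 \<le> t" "t \<le> 1" and x: "x \<in> rat_cube (segment_point c d t)"
    unfolding cube_sweep_def by auto
  define e where "e = int_to_rat_vec d - int_to_rat_vec c"
  have "x - t *s e \<in> rat_cube (int_to_rat_vec c)" "x + (1 - t) *s e \<in> rat_cube (int_to_rat_vec d)"
    using x by (auto simp: rat_cube_def e_def segment_point_nth int_to_rat_vec_def algebra_simps)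
  moreover have "rat_cube (int_to_rat_vec c) \<subseteq> rat_convex_hull (int_to_rat_vec ` (box1 c \<union> box1 d))"
    "rat_cube (int_to_rat_vec d) \<subseteq> rat_convex_hull (int_to_rat_vec ` (box1 c \<union> box1 d))"
    by (rule order.trans[OF rat_cube_subset_rat_convex_hull_box1 rat_convex_hull_mono], blast)+
  ultimately have "x - t *s e \<in> rat_convex_hull (int_to_rat_vec ` (box1 c \<union> box1 d))"
    "x + (1 - t) *s e \<in> rat_convex_hull (int_to_rat_vec ` (box1 c \<union> box1 d))"
    by blast+
  from rat_convex_hull_convex[OF this t]
  show "x \<in> rat_convex_hull (int_to_rat_vec ` (box1 c \<union> box1 d))"
    by (simp add: vec_eq_iff algebra_simps)
qed

lemma rat_convex_hull_box1_Un:
  "rat_convex_hull (int_to_rat_vec ` (box1 c \<union> box1 d)) = cube_sweep c d"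
  using rat_convex_hull_subset_cube_sweep cube_sweep_subset_rat_convex_hull by blast

lemma box1_imp_int_to_rat_vec_mem_cube_sweep: "z \<in> box1 c \<Longrightarrow> int_to_rat_vec z \<in> cube_sweep c d"
  using int_to_rat_vec_mem_rat_cube_int[of z c] by (force simp: cube_sweep_def segment_point_0)

definition l1_dist :: "int^'n \<Rightarrow> int^'n \<Rightarrow> nat" where
  "l1_dist c z = (\<Sum>i\<in>UNIV. nat \<bar>z$i - c$i\<bar>)"

lemma l1_dist_add_axis_less:
  assumes "\<bar>z$i + a - c$i\<bar> < \<bar>z$i - c$i\<bar>"
  shows "l1_dist c (z + axis i a) < l1_dist c z"
  unfolding l1_dist_def
proof (rule sum_strict_mono_ex1)
  show "\<forall>j\<in>UNIV. nat \<bar>(z + axis i a) $ j - c $ j\<bar> \<le> nat \<bar>z $ j - c $ j\<bar>"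
    using assms by (auto simp: axis_def)
  show "\<exists>j\<in>UNIV. nat \<bar>(z + axis i a) $ j - c $ j\<bar> < nat \<bar>z $ j - c $ j\<bar>"
    using assms by (intro bexI[of _ i]) (auto simp: axis_def)
qed simp

lemma add_axis_mem_rat_cube:
  assumes "int_to_rat_vec z \<in> rat_cube p" "p$i \<le> of_int (z$i + a)" "of_int (z$i + a) \<le> p$i + 1"
  shows "int_to_rat_vec (z + axis i a) \<in> rat_cube p"
  using assms by (auto simp: int_to_rat_vec_mem_rat_cube axis_def)

lemma lattice_step_add_axis: "\<bar>a\<bar> = 1 \<Longrightarrow> lattice_step z (z + axis i a)"
  unfolding lattice_step_def by (cases "a = 1") (auto simp: abs_if split: if_splits)

lemma lattice_step_sym: "lattice_step x y \<Longrightarrow> lattice_step y x"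
proof -
  have "axis i (-1) = - (axis i 1 :: int^'n)" for i by (simp add: vec_eq_iff axis_def)
  moreover assume "lattice_step x y"
  ultimately show "lattice_step y x"
    unfolding lattice_step_def by (metis minus_diff_eq minus_minus)
qed

text \<open>The constructed \<open>s\<close> is the least parameter whose cube contains \<open>z\<close>; for \<open>s > 0\<close> the last
  conclusion names a coordinate in which a face of that cube passes through \<open>z\<close>.\<close>
lemma least_sweep_parameter:
  fixes c d z :: "int^'n"
  assumes t: "0 \<le> t" "t \<le> 1" and z: "int_to_rat_vec z \<in> rat_cube (segment_point c d t)"
  obtains s where "0 \<le> s" "s \<le> 1" "int_to_rat_vec z \<in> rat_cube (segment_point c d s)"
    "0 < s \<Longrightarrow> \<exists>i. (c$i < d$i \<and> of_int (z$i) - 1 = segment_point c d s $ i)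
                  \<or> (d$i < c$i \<and> of_int (z$i) = segment_point c d s $ i)"
proof -
  define e where "e i = of_int (d$i) - (of_int (c$i) :: rat)" for i
  define L where "L i = (if e i > 0 then (of_int (z$i) - 1 - of_int (c$i)) / e i
      else if e i < 0 then (of_int (z$i) - of_int (c$i)) / e i else 0)" for i
  define s where "s = Max (insert 0 (range L))"
  have zt: "of_int (c$i) + t * e i \<le> of_int (z$i) \<and> of_int (z$i) \<le> of_int (c$i) + t * e i + 1" for i
    using z by (simp add: int_to_rat_vec_mem_rat_cube segment_point_nth e_def)
  have "L i \<le> t" for i
    using zt[of i] t by (auto simp: L_def pos_divide_le_eq neg_divide_le_eq)
  then have "s \<le> t" using t unfolding s_def by (intro Max.boundedI) auto
  have Ls: "L i \<le> s" for i unfolding s_def by (rule Max_ge) auto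
  have "0 \<le> s" unfolding s_def by (rule Max_ge) auto
  have "of_int (c$i) + s * e i \<le> of_int (z$i) \<and> of_int (z$i) \<le> of_int (c$i) + s * e i + 1" for i
  proof (cases "e i" "0 :: rat" rule: linorder_cases)
    case less
    then have "t * e i \<le> s * e i" using \<open>s \<le> t\<close> by (intro mult_right_mono_neg) auto
    moreover have "s * e i \<le> of_int (z$i) - of_int (c$i)"
      using Ls[of i] less by (simp add: L_def neg_divide_le_eq)
    ultimately show ?thesis using zt[of i] by linarith
  next
    case greater
    then have "s * e i \<le> t * e i" using \<open>s \<le> t\<close> by (intro mult_right_mono) auto
    moreover have "of_int (z$i) - 1 - of_int (c$i) \<le> s * e i"
      using Ls[of i] greater by (simp add: L_def pos_divide_le_eq)
    ultimately show ?thesis using zt[of i] by linarith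
  qed (use zt[of i] in simp)
  then have "int_to_rat_vec z \<in> rat_cube (segment_point c d s)"
    by (simp add: int_to_rat_vec_mem_rat_cube segment_point_nth e_def)
  moreover have "\<exists>i. (c$i < d$i \<and> of_int (z$i) - 1 = segment_point c d s $ i)
                  \<or> (d$i < c$i \<and> of_int (z$i) = segment_point c d s $ i)" if "0 < s"
  proof -
    have "s \<in> insert 0 (range L)" unfolding s_def by (rule Max_in) auto
    with that obtain i where "s = L i" by auto
    with that have "e i \<noteq> 0" "s * e i = (if e i > 0 then of_int (z$i) - 1 - of_int (c$i)
        else of_int (z$i) - of_int (c$i))"
      by (auto simp: L_def)
    then show ?thesis
      by (intro exI[of _ i]) (auto simp: e_def segment_point_nth algebra_simps split: if_splits)
  qed
  ultimately show thesis using that \<open>0 \<le> s\<close> \<open>s \<le> t\<close> t by auto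
qed

lemma cube_sweep_descent:
  fixes c d z :: "int^'n"
  assumes z: "int_to_rat_vec z \<in> cube_sweep c d" and "z \<noteq> c"
  shows "\<exists>z'. int_to_rat_vec z' \<in> cube_sweep c d \<and> lattice_step z z' \<and> l1_dist c z' < l1_dist c z"
proof -
  obtain t where t: "0 \<le> t" "t \<le> 1" "int_to_rat_vec z \<in> rat_cube (segment_point c d t)"
    using z unfolding cube_sweep_def by auto
  obtain s where s: "0 \<le> s" "s \<le> 1" and zs: "int_to_rat_vec z \<in> rat_cube (segment_point c d s)"
    and stop: "0 < s \<Longrightarrow> \<exists>i. (c$i < d$i \<and> of_int (z$i) - 1 = segment_point c d s $ i)
                  \<or> (d$i < c$i \<and> of_int (z$i) = segment_point c d s $ i)"
    using least_sweep_parameter[OF t] by blast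
  have step: "\<exists>z'. int_to_rat_vec z' \<in> cube_sweep c d \<and> lattice_step z z' \<and> l1_dist c z' < l1_dist c z"
    if "\<bar>a\<bar> = 1" "\<bar>z$i + a - c$i\<bar> < \<bar>z$i - c$i\<bar>"
      "segment_point c d s $ i \<le> of_int (z$i + a)" "of_int (z$i + a) \<le> segment_point c d s $ i + 1"
    for i a
  proof (intro exI conjI)
    show "int_to_rat_vec (z + axis i a) \<in> cube_sweep c d"
      using add_axis_mem_rat_cube[OF zs that(3,4)] s by (auto simp: cube_sweep_def)
  qed (use that lattice_step_add_axis l1_dist_add_axis_less in auto)
  show ?thesis
  proof (cases "s = 0")
    case True
    then have "z \<in> box1 c" using zs by (simp add: segment_point_0 int_to_rat_vec_mem_rat_cube_int)
    obtain i where "z$i \<noteq> c$i" using \<open>z \<noteq> c\<close> by (auto simp: vec_eq_iff)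
    moreover have "c$i \<le> z$i" "z$i \<le> c$i + 1" using \<open>z \<in> box1 c\<close> by (auto simp: box1_def)
    ultimately have "z$i = c$i + 1" by linarith
    then show ?thesis using True by (intro step[of "-1" i]) (auto simp: segment_point_nth)
  next
    case False
    then obtain i where "(c$i < d$i \<and> of_int (z$i) - 1 = segment_point c d s $ i)
                  \<or> (d$i < c$i \<and> of_int (z$i) = segment_point c d s $ i)"
      using stop s by fastforce
    then show ?thesis
    proof (elim disjE conjE)
      assume "c$i < d$i" and bound: "of_int (z$i) - 1 = segment_point c d s $ i"
      then have "rat_of_int (z$i - 1 - c$i) = s * of_int (d$i - c$i)" by (simp add: segment_point_nth)
      moreover have "0 \<le> s * rat_of_int (d$i - c$i)" using s \<open>c$i < d$i\<close> by simp
      ultimately have "0 \<le> z$i - 1 - c$i" by linarith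
      then show ?thesis using bound by (intro step[of "-1" i]) auto
    next
      assume "d$i < c$i" and bound: "of_int (z$i) = segment_point c d s $ i"
      then have "rat_of_int (z$i - c$i) = s * of_int (d$i - c$i)" by (simp add: segment_point_nth)
      moreover have "s * rat_of_int (d$i - c$i) < 0"
        using s False \<open>d$i < c$i\<close> by (simp add: mult_pos_neg)
      ultimately have "z$i - c$i < 0" by linarith
      then show ?thesis using bound by (intro step[of 1 i]) auto
    qed
  qed
qed

definition lattice_step_within :: "(int^'n) set \<Rightarrow> int^'n \<Rightarrow> int^'n \<Rightarrow> bool" where
  "lattice_step_within S a b \<longleftrightarrow> a \<in> S \<and> b \<in> S \<and> lattice_step a b"

lemma rtranclp_lattice_step_within_descent:
  fixes f :: "int^'n \<Rightarrow> nat"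
  assumes descent: "\<And>z. z \<in> S \<Longrightarrow> z \<noteq> c \<Longrightarrow> \<exists>z'\<in>S. lattice_step z z' \<and> f z' < f z"
    and "z \<in> S"
  shows "(lattice_step_within S)\<^sup>*\<^sup>* z c"
  using \<open>z \<in> S\<close>
proof (induction "f z" arbitrary: z rule: less_induct)
  case less
  show ?case
  proof (cases "z = c")
    case False
    then obtain z' where "z' \<in> S" "lattice_step z z'" "f z' < f z" using descent less.prems by blast
    then have "lattice_step_within S z z'" using less.prems by (simp add: lattice_step_within_def)
    moreover have "(lattice_step_within S)\<^sup>*\<^sup>* z' c" using less \<open>z' \<in> S\<close> \<open>f z' < f z\<close> by blast
    ultimately show ?thesis by (rule converse_rtranclp_into_rtranclp)
  qed simp
qed

lemma walk_through_rtranclp: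
  assumes "R\<^sup>*\<^sup>* x y" and "\<forall>i. R (T i) (T (Suc i))" "T 0 = y"
  shows "\<exists>T' n. (\<forall>i. R (T' i) (T' (Suc i))) \<and> T' 0 = x \<and> T' n = y"
  using assms(1)
proof (induction rule: converse_rtranclp_induct)
  case base
  then show ?case using assms(2,3) by blast
next
  case (step x x')
  then obtain T' n where "\<forall>i. R (T' i) (T' (Suc i))" "T' 0 = x'" "T' n = y" by blast
  with step.hyps(1) have "\<forall>i. R (case_nat x T' i) (case_nat x T' (Suc i))"
    by (auto split: nat.split)
  with \<open>T' n = y\<close> show ?case by (intro exI[of _ "case_nat x T'"] exI[of _ "Suc n"]) simp
qed

lemma lattice_path_connectedI:
  assumes "\<forall>z\<in>S. (lattice_step_within S)\<^sup>*\<^sup>* z c" and "c \<in> S" "c' \<in> S" "lattice_step c c'"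
  shows "lattice_path_connected S"
  unfolding lattice_path_connected_def
proof (intro ballI)
  fix z1 z2 assume z: "z1 \<in> S" "z2 \<in> S"
  let ?R = "lattice_step_within S"
  have "symp ?R" unfolding symp_def lattice_step_within_def using lattice_step_sym by blast
  have "?R\<^sup>*\<^sup>* c z2" using sympD[OF symp_rtranclp[OF \<open>symp ?R\<close>]] assms(1) z(2) by blast
  then have "?R\<^sup>*\<^sup>* z1 z2" using assms(1) z(1) by (blast intro: rtranclp_trans)
  have "?R c c'" "?R c' c" using assms(2-4) \<open>symp ?R\<close>
    by (auto simp: lattice_step_within_def dest: sympD)
  then have "\<forall>i. ?R ((\<lambda>j. if even j then c else c') i) ((\<lambda>j. if even j then c else c') (Suc i))"
    by simp
  then obtain T n where "\<forall>i. ?R (T i) (T (Suc i))" "T 0 = z2"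
    using walk_through_rtranclp[of ?R z2 c "\<lambda>j. if even j then c else c'"] assms(1) z(2) by auto
  then obtain T n where T: "\<forall>i. ?R (T i) (T (Suc i))" "T 0 = z1" "T n = z2"
    using walk_through_rtranclp[OF \<open>?R\<^sup>*\<^sup>* z1 z2\<close>] by blast
  then show "\<exists>T n. (\<forall>i. T i \<in> S) \<and> (\<forall>i. lattice_step (T i) (T (Suc i))) \<and> T 0 = z1 \<and> T n = z2"
    by (auto simp: lattice_step_within_def)
qed

theorem mainTheorem20:
  fixes B0 B1 :: "(int^'n) set"
  assumes "is_box1 B0" and "is_box1 B1"
  shows "lattice_path_connected
           {z. int_to_rat_vec z \<in> rat_convex_hull (int_to_rat_vec ` (B0 \<union> B1))}"
proof -
  obtain c d where B: "B0 = box1 c" "B1 = box1 d" using assms unfolding is_box1_def by blast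
  let ?S = "{z. int_to_rat_vec z \<in> cube_sweep c d}"
  have "\<forall>z\<in>?S. (lattice_step_within ?S)\<^sup>*\<^sup>* z c"
    by (intro ballI rtranclp_lattice_step_within_descent[where f = "l1_dist c"])
      (use cube_sweep_descent in auto)
  moreover have "c \<in> box1 c" "c + axis i 1 \<in> box1 c" for i by (auto simp: box1_def axis_def)
  then have "c \<in> ?S" "c + axis i 1 \<in> ?S" for i
    using box1_imp_int_to_rat_vec_mem_cube_sweep by blast+
  ultimately have "lattice_path_connected ?S"
    by (rule lattice_path_connectedI[OF _ _ _ lattice_step_add_axis]) simp
  then show ?thesis by (simp add: B rat_convex_hull_box1_Un)
qed

end
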